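(* For all integers $n,k$ with $0\leqslant k\leqslant n-1$, \begin{align*} \sum_{m=k}^{n-1}(-1)^{n+m}\frac{2m+1}{(n-m)(n+m+1)} &= -\psi(2n+1)+\psi(n+k+1)+\psi(n+1)-\psi(n-k+1)\\ &\quad -\psi\left(\left\lfloor\frac{n+k}{2}\right\rfloor+1\right) +\psi\left(\left\lfloor\frac{n-k}{2}\right\rfloor+1\right). \end{align*}
   Context: $\psi=\Gamma'/\Gamma$ is the digamma function; $\lfloor x\rfloor$ denotes the greatest integer not exceeding $x$. *)

theory Defs
  imports "HOL-Analysis.Analysis"
begin

end

theory Submission imports Defs begin

text \<open>
  Since \<open>\<psi>(j + 1) = H\<^sub>j - \<gamma>\<close>, the Euler constants on the right cancel and the right-hand
  side becomes an alternating combination \<open>G(n, k)\<close> of harmonic numbers with \<open>G(n, n) = 0\<close>.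
  The partial fraction \<open>(2m + 1)/((n - m)(n + m + 1)) = 1/(n - m) - 1/(n + m + 1)\<close> shows that
  the \<open>m\<close>-th summand is \<open>G(n, m) - G(n, m + 1)\<close>: the floor terms change only for the one of
  \<open>n + m\<close>, \<open>n - m - 1\<close> that is odd, and then by twice the reciprocal, which flips the sign of
  the corresponding fraction. The sum therefore telescopes to \<open>G(n, k)\<close>.
\<close>

definition harm_combination :: "nat \<Rightarrow> nat \<Rightarrow> real" where
  "harm_combination n k =
     - harm (2 * n) + harm (n + k) + harm n - harm (n - k)
     - harm ((n + k) div 2) + harm ((n - k) div 2)"

lemma harm_combination_diag [simp]: "harm_combination n n = 0"
  by (simp add: harm_combination_def mult_2)

lemma harm_Suc_minus_harm: "harm (Suc j) - harm j = 1 / (real j + 1)"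
  by (simp add: harm_Suc inverse_eq_divide add.commute)

lemma harm_Suc_div_2_minus_harm_div_2:
  "harm (Suc j div 2) - harm (j div 2) = (if odd j then 2 / (real j + 1) else 0)"
proof (cases "even j")
  case False
  then obtain e where "j = Suc (2 * e)" by (metis oddE Suc_eq_plus1)
  then show ?thesis
    using harm_Suc_minus_harm[of e] by (simp add: field_simps)
qed simp

lemma alternating_partial_fraction_eq_harm_combination_diff:
  assumes "m < n"
  shows "(-1) ^ (n + m) * (2 * real m + 1) / ((real n - real m) * (real n + real m + 1))
       = harm_combination n m - harm_combination n (Suc m)"
proof -
  define p where "p = n - Suc m"
  have n_minus: "n - m = Suc p" "n - Suc m = p" and n_plus: "n + Suc m = Suc (n + m)"
    using assms by (auto simp: p_def)
  have real_n_minus: "real n - real m = real p + 1"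
    using assms by (simp add: p_def of_nat_diff)
  have partial_fraction: "(2 * real m + 1) / ((real n - real m) * (real n + real m + 1))
      = 1 / (real p + 1) - 1 / (real n + real m + 1)"
    using real_n_minus by (simp add: field_simps)
  have parity: "odd (n + m) \<longleftrightarrow> even p"
    using assms by (simp add: p_def)
  have "harm_combination n m - harm_combination n (Suc m)
      = - (harm (Suc (n + m)) - harm (n + m)) - (harm (Suc p) - harm p)
        + (harm (Suc (n + m) div 2) - harm ((n + m) div 2))
        + (harm (Suc p div 2) - harm (p div 2))"
    unfolding harm_combination_def n_minus n_plus by simp
  also have "\<dots> = (-1) ^ (n + m) * (1 / (real p + 1) - 1 / (real n + real m + 1))"
    unfolding harm_Suc_minus_harm harm_Suc_div_2_minus_harm_div_2
    using parity by (cases "even p") simp_all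
  finally show ?thesis
    by (metis partial_fraction times_divide_eq_right)
qed

lemma alternating_sum_eq_harm_combination:
  assumes "k \<le> n"
  shows "(\<Sum>m = k..<n. (-1) ^ (n + m) * (2 * real m + 1)
            / ((real n - real m) * (real n + real m + 1)))
       = harm_combination n k"
proof -
  have "(\<Sum>m = k..<n. (-1) ^ (n + m) * (2 * real m + 1)
            / ((real n - real m) * (real n + real m + 1)))
      = (\<Sum>m = k..<n. harm_combination n m - harm_combination n (Suc m))"
    by (simp add: alternating_partial_fraction_eq_harm_combination_diff)
  also have "\<dots> = - (\<Sum>m = k..<n. harm_combination n (Suc m) - harm_combination n m)"
    by (subst sum_negf[symmetric]) simp
  also have "\<dots> = harm_combination n k"
    using sum_Suc_diff'[OF assms, of "harm_combination n"] by simp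
  finally show ?thesis .
qed

lemma Digamma_of_int_Suc: "Digamma (of_int (int j + 1) :: real) = harm j - euler_mascheroni"
  using Digamma_of_nat[of j] by (simp add: add.commute)

theorem mainTheorem4:
  fixes n k :: int
  assumes "0 \<le> k" and "k \<le> n - 1"
  shows "(\<Sum>m\<in>{k..n-1}. (-1) ^ nat (n + m) * (2 * of_int m + 1) /
            ((of_int n - of_int m) * (of_int n + of_int m + 1)) :: real)
       = - Digamma (of_int (2*n+1)) + Digamma (of_int (n+k+1)) + Digamma (of_int (n+1))
         - Digamma (of_int (n-k+1))
         - Digamma (of_int ((n+k) div 2 + 1)) + Digamma (of_int ((n-k) div 2 + 1))"
proof -
  obtain K N where k: "k = int K" and n: "n = int N" and "K \<le> N"
    using assms by (metis nonneg_eq_int order.trans zle_diff1_eq zle_int less_imp_le)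
  have "{k..n-1} = int ` {K..<N}"
    unfolding k n image_int_atLeastLessThan by auto
  then have sum_as_nat:
    "(\<Sum>m\<in>{k..n-1}. (-1) ^ nat (n + m) * (2 * of_int m + 1) /
            ((of_int n - of_int m) * (of_int n + of_int m + 1)) :: real)
     = (\<Sum>m = K..<N. (-1) ^ (N + m) * (2 * real m + 1)
            / ((real N - real m) * (real N + real m + 1)))"
    by (simp add: sum.reindex n nat_add_distrib)
  have arguments: "2*n+1 = int (2*N) + 1" "n+k+1 = int (N+K) + 1" "n+1 = int N + 1"
     "n-k+1 = int (N-K) + 1" "(n+k) div 2 + 1 = int ((N+K) div 2) + 1"
     "(n-k) div 2 + 1 = int ((N-K) div 2) + 1"
    using \<open>K \<le> N\<close> by (auto simp: k n zdiv_int of_nat_diff)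
  show ?thesis
    unfolding sum_as_nat alternating_sum_eq_harm_combination[OF \<open>K \<le> N\<close>]
      arguments Digamma_of_int_Suc
    by (simp add: harm_combination_def)
qed

end
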